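(* Let $\kappa\in\mathbb{C}$, $l\ge N-1$, $\mu=(\mu_1,\ldots,\mu_{N-1})$ and $\lambda=(\lambda_1,\ldots,\lambda_l)$. Then \[ \Delta(\mu,\lambda)^{-\kappa}\, D_{\mu_{N-1}}(-\kappa)\cdots D_{\mu_1}(-\kappa)\,\Delta(\mu,\lambda)^{\kappa}=\kappa^{N-1}Z_1(\mu,\lambda), \] where $Z_1(\mu,\lambda)$ is the coefficient of $x_1\cdots x_l$ in \[ \frac{1}{(l-N+1)!}\prod_{j=1}^l\Big(\sum_{i=1}^{N-1}\frac{x_i}{\mu_i-\lambda_j}+x_N+\cdots+x_l\Big). \]
   Context: $\Delta(\mu,\lambda)=\prod_{i,j}(\mu_i-\lambda_j)$, which is symmetric in $\mu$. The rational Dunkl operators in $\mu$ are $D_{\mu_i}(c)=\partial_{\mu_i}+c\sum_{j\neq i}\frac{1}{\mu_i-\mu_j}(1-s_{ij})$, $s_{ij}$ exchanging $\mu_i,\mu_j$. They are applied successively (first $D_{\mu_1}$) to functions of the form $\Delta(\mu,\lambda)^\kappa R(\mu)$ with $R$ rational, where $\Delta(\mu,\lambda)^\kappa$ is a fixed branch and $s_{ij}(\Delta(\mu,\lambda)^\kappa R)=\Delta(\mu,\lambda)^\kappa s_{ij}(R)$. *)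

theory Defs
  imports "HOL-Analysis.Analysis"
begin

text \<open>Points are functions nat => complex; mu uses indices 1..n (n = N-1),
  lambda uses indices 1..l.\<close>

definition Delta :: "nat \<Rightarrow> nat \<Rightarrow> (nat \<Rightarrow> complex) \<Rightarrow> (nat \<Rightarrow> complex) \<Rightarrow> complex" where
  "Delta n l mu lam = (\<Prod>i\<in>{1..n}. \<Prod>j\<in>{1..l}. mu i - lam j)"

definition swap_coords :: "(nat \<Rightarrow> complex) \<Rightarrow> nat \<Rightarrow> nat \<Rightarrow> (nat \<Rightarrow> complex)" where
  "swap_coords mu i j = mu(i := mu j, j := mu i)"

definition dunkl :: "nat \<Rightarrow> complex \<Rightarrow> nat \<Rightarrow> ((nat \<Rightarrow> complex) \<Rightarrow> complex)
    \<Rightarrow> (nat \<Rightarrow> complex) \<Rightarrow> complex" where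
  "dunkl n c i F mu =
     deriv (\<lambda>t. F (mu(i := t))) (mu i)
     + c * (\<Sum>j\<in>{1..n} - {i}. (F mu - F (swap_coords mu i j)) / (mu i - mu j))"

text \<open>dunkl_seq n c k F = D_{mu_k}(c) ... D_{mu_1}(c) F  (D_{mu_1} applied first).\<close>
fun dunkl_seq :: "nat \<Rightarrow> complex \<Rightarrow> nat \<Rightarrow> ((nat \<Rightarrow> complex) \<Rightarrow> complex)
    \<Rightarrow> (nat \<Rightarrow> complex) \<Rightarrow> complex" where
  "dunkl_seq n c 0 F = F"
| "dunkl_seq n c (Suc k) F = dunkl n c (Suc k) (dunkl_seq n c k F)"

text \<open>Coefficient of the monomial prod_k x_k^(alpha k) (k in 1..l) in the product
  prod_{j=1..l} (sum_{k=1..l} a j k * x_k), obtained by expanding the product.\<close>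
definition lin_prod_coeff :: "nat \<Rightarrow> (nat \<Rightarrow> nat \<Rightarrow> complex) \<Rightarrow> (nat \<Rightarrow> nat) \<Rightarrow> complex" where
  "lin_prod_coeff l a alpha =
     (\<Sum>f\<in>{f. f \<in> {1..l} \<rightarrow>\<^sub>E {1..l} \<and> (\<forall>k\<in>{1..l}. card {j\<in>{1..l}. f j = k} = alpha k)}.
        \<Prod>j\<in>{1..l}. a j (f j))"

text \<open>Coefficient of x_k in the j-th factor sum_{i<N} x_i/(mu_i - lambda_j) + x_N + ... + x_l.\<close>
definition Z1_factor_coeff :: "nat \<Rightarrow> (nat \<Rightarrow> complex) \<Rightarrow> (nat \<Rightarrow> complex) \<Rightarrow> nat \<Rightarrow> nat \<Rightarrow> complex" where
  "Z1_factor_coeff N mu lam j k = (if k \<le> N - 1 then 1 / (mu k - lam j) else 1)"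

definition Z1 :: "nat \<Rightarrow> nat \<Rightarrow> (nat \<Rightarrow> complex) \<Rightarrow> (nat \<Rightarrow> complex) \<Rightarrow> complex" where
  "Z1 N l mu lam =
     lin_prod_coeff l (Z1_factor_coeff N mu lam) (\<lambda>_. 1) / of_nat (fact (l - (N - 1)))"

end

theory Submission
  imports Defs "HOL-Combinatorics.Permutations"
begin

text \<open>
  Let G_k(\<mu>) = 1/(l-k)! \<Sum>_\<sigma> \<Prod>_{i=1..k} 1/(\<mu>_i - \<lambda>_\<sigma>(i)), the sum running over the
  permutations \<sigma> of {1..l} (this is Z_partial l k \<lambda> \<mu> below). The coefficient of
  x_1 \<dots> x_l in a product of linear forms is the permanent of their coefficients, whence
  G_{N-1} = Z_1, and it suffices to show
  D_k(-\<kappa>) \<dots> D_1(-\<kappa>) \<Delta>^\<kappa> = \<kappa>^k G_k \<Delta>^\<kappa> by induction on k.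
  In the induction step the derivative in \<mu>_{k+1} multiplies \<Delta>^\<kappa> by \<kappa> \<Sum>_s 1/(\<mu>_{k+1} - \<lambda>_s).
  Since \<Delta> is symmetric and G_k only involves \<mu>_1, \<dots>, \<mu>_k, the difference quotients for
  j > k+1 vanish, while the one for j \<le> k removes from the summand of \<sigma> the term s = \<sigma>(j).
  The l - k remaining terms s = \<sigma>(r), r > k, are exchanged by \<sigma> \<mapsto> \<sigma> \<circ> (r k+1), which
  fixes the summand of G_k, so together they give G_{k+1}.
\<close>

section \<open>Symmetrised sums over permutations\<close>

definition Z_summand :: "nat \<Rightarrow> (nat \<Rightarrow> complex) \<Rightarrow> (nat \<Rightarrow> complex) \<Rightarrow> (nat \<Rightarrow> nat) \<Rightarrow> complex" where
  "Z_summand k lam m q = (\<Prod>i\<in>{1..k}. 1 / (m i - lam (q i)))"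

definition Z_partial :: "nat \<Rightarrow> nat \<Rightarrow> (nat \<Rightarrow> complex) \<Rightarrow> (nat \<Rightarrow> complex) \<Rightarrow> complex" where
  "Z_partial l k lam m = (\<Sum>q | q permutes {1..l}. Z_summand k lam m q) / fact (l - k)"

lemma Z_summand_cong:
  assumes "\<And>i. i \<in> {1..k} \<Longrightarrow> m i = m' i" and "\<And>i. i \<in> {1..k} \<Longrightarrow> q i = q' i"
  shows "Z_summand k lam m q = Z_summand k lam m' q'"
  unfolding Z_summand_def using assms by (intro prod.cong) auto

lemma Z_summand_Suc:
  "Z_summand (Suc k) lam m q = Z_summand k lam m q / (m (Suc k) - lam (q (Suc k)))"
  by (simp add: Z_summand_def)

lemma Z_partial_0: "Z_partial l 0 lam m = 1"
  by (simp add: Z_partial_def Z_summand_def card_permutations)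

lemma Z_partial_cong:
  assumes "\<And>i. i \<in> {1..k} \<Longrightarrow> m i = m' i"
  shows "Z_partial l k lam m = Z_partial l k lam m'"
  unfolding Z_partial_def using Z_summand_cong[OF assms] by simp

lemma sum_permutes_times_sum:
  fixes W :: "(nat \<Rightarrow> nat) \<Rightarrow> 'a::comm_semiring_1" and c :: "nat \<Rightarrow> 'a"
  assumes "k < l"
    and W: "\<And>q q'. (\<And>i. i \<in> {1..k} \<Longrightarrow> q i = q' i) \<Longrightarrow> W q = W q'"
  shows "(\<Sum>q | q permutes {1..l}. W q * (\<Sum>s\<in>{1..l}. c s))
       = (\<Sum>q | q permutes {1..l}. W q * (\<Sum>j\<in>{1..k}. c (q j)))
         + of_nat (l - k) * (\<Sum>q | q permutes {1..l}. W q * c (q (Suc k)))"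
proof -
  let ?P = "{q. q permutes {1..l}}"
  have split: "(\<Sum>s\<in>{1..l}. c s) = (\<Sum>j\<in>{1..k}. c (q j)) + (\<Sum>r\<in>{Suc k..l}. c (q r))"
    if "q permutes {1..l}" for q
  proof -
    have "(\<Sum>s\<in>{1..l}. c s) = (\<Sum>r\<in>{1..l}. c (q r))"
      using sum.permute[OF that] by (simp add: comp_def)
    also have "\<dots> = (\<Sum>r\<in>{1..k} \<union> {Suc k..l}. c (q r))"
      using assms(1) by (intro arg_cong[where f = "sum _"]) auto
    also have "\<dots> = (\<Sum>j\<in>{1..k}. c (q j)) + (\<Sum>r\<in>{Suc k..l}. c (q r))"
      by (rule sum.union_disjoint) auto
    finally show ?thesis .
  qed
  have shift: "(\<Sum>q\<in>?P. W q * c (q r)) = (\<Sum>q\<in>?P. W q * c (q (Suc k)))"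
    if r: "r \<in> {Suc k..l}" for r
  proof -
    let ?\<tau> = "Transposition.transpose r (Suc k)"
    have "?\<tau> permutes {1..l}" using r by (intro permutes_swap_id) auto
    then have "(\<Sum>q\<in>?P. W q * c (q (Suc k))) = (\<Sum>q\<in>?P. W (q \<circ> ?\<tau>) * c ((q \<circ> ?\<tau>) (Suc k)))"
      by (rule sum_permutations_compose_right)
    also have "\<dots> = (\<Sum>q\<in>?P. W q * c (q r))"
      using r by (intro sum.cong refl arg_cong2[where f = "(*)"] W) (auto simp: Transposition.transpose_def)
    finally show ?thesis by simp
  qed
  have "(\<Sum>q\<in>?P. W q * (\<Sum>s\<in>{1..l}. c s))
      = (\<Sum>q\<in>?P. W q * (\<Sum>j\<in>{1..k}. c (q j)) + (\<Sum>r\<in>{Suc k..l}. W q * c (q r)))"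
  proof (intro sum.cong refl)
    fix q assume "q \<in> ?P"
    then have q: "q permutes {1..l}" by simp
    show "W q * (\<Sum>s\<in>{1..l}. c s)
        = W q * (\<Sum>j\<in>{1..k}. c (q j)) + (\<Sum>r\<in>{Suc k..l}. W q * c (q r))"
      unfolding split[OF q] by (simp add: distrib_left sum_distrib_left)
  qed
  also have "\<dots> = (\<Sum>q\<in>?P. W q * (\<Sum>j\<in>{1..k}. c (q j))) + (\<Sum>r\<in>{Suc k..l}. \<Sum>q\<in>?P. W q * c (q r))"
    unfolding sum.distrib by (rule arg_cong[where f = "(+) _"], rule sum.swap)
  also have "(\<Sum>r\<in>{Suc k..l}. \<Sum>q\<in>?P. W q * c (q r))
      = (\<Sum>r\<in>{Suc k..l}. \<Sum>q\<in>?P. W q * c (q (Suc k)))"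
    by (rule sum.cong[OF refl shift])
  also have "\<dots> = of_nat (l - k) * (\<Sum>q\<in>?P. W q * c (q (Suc k)))"
    by simp
  finally show ?thesis .
qed

lemma Z_partial_Suc:
  assumes "k < l"
  shows "Z_partial l (Suc k) lam m
       = Z_partial l k lam m * (\<Sum>s\<in>{1..l}. 1 / (m (Suc k) - lam s))
         - (\<Sum>j\<in>{1..k}. (\<Sum>q | q permutes {1..l}. Z_summand k lam m q / (m (Suc k) - lam (q j)))
              / fact (l - k))"
proof -
  let ?P = "{q. q permutes {1..l}}"
  let ?W = "Z_summand k lam m" and ?c = "\<lambda>s. 1 / (m (Suc k) - lam s)"
  define A where "A = (\<Sum>s\<in>{1..l}. ?c s)"
  define X where "X j = (\<Sum>q\<in>?P. ?W q / (m (Suc k) - lam (q j)))" for j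
  have W: "?W q = ?W q'" if "\<And>i. i \<in> {1..k} \<Longrightarrow> q i = q' i" for q q'
    using that by (rule Z_summand_cong[OF refl])
  have low: "(\<Sum>q\<in>?P. ?W q * (\<Sum>j\<in>{1..k}. ?c (q j))) = (\<Sum>j\<in>{1..k}. X j)"
    unfolding X_def sum_distrib_left by (subst sum.swap) simp
  have "(\<Sum>q\<in>?P. ?W q * A)
      = (\<Sum>q\<in>?P. ?W q * (\<Sum>j\<in>{1..k}. ?c (q j))) + of_nat (l - k) * (\<Sum>q\<in>?P. ?W q * ?c (q (Suc k)))"
    unfolding A_def by (rule sum_permutes_times_sum[OF assms W])
  also have "\<dots> = (\<Sum>j\<in>{1..k}. X j) + of_nat (l - k) * (\<Sum>q\<in>?P. Z_summand (Suc k) lam m q)"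
    unfolding low by (simp add: Z_summand_Suc)
  finally have split: "(\<Sum>q\<in>?P. ?W q * A)
      = (\<Sum>j\<in>{1..k}. X j) + of_nat (l - k) * (\<Sum>q\<in>?P. Z_summand (Suc k) lam m q)" .
  have fact: "fact (l - k) = (of_nat (l - k) * fact (l - Suc k) :: complex)"
    using assms by (simp add: fact_reduce)
  have "Z_partial l k lam m * A - (\<Sum>j\<in>{1..k}. X j / fact (l - k))
      = ((\<Sum>q\<in>?P. ?W q * A) - (\<Sum>j\<in>{1..k}. X j)) / fact (l - k)"
    unfolding Z_partial_def sum_distrib_right[symmetric] sum_divide_distrib[symmetric]
    by (simp add: diff_divide_distrib)
  also have "\<dots> = of_nat (l - k) * (\<Sum>q\<in>?P. Z_summand (Suc k) lam m q) / fact (l - k)"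
    unfolding split by simp
  also have "\<dots> = Z_partial l (Suc k) lam m"
    using assms unfolding Z_partial_def fact by simp
  finally show ?thesis
    unfolding A_def X_def by simp
qed

lemma Z_summand_swap_coords_quotient:
  assumes j: "j \<in> {1..k}" and i: "i \<notin> {1..k}"
    and "m i \<noteq> m j" and "m i \<noteq> lam (q j)" and "m j \<noteq> lam (q j)"
  shows "(Z_summand k lam m q - Z_summand k lam (swap_coords m i j) q) / (m i - m j)
       = Z_summand k lam m q / (m i - lam (q j))"
proof -
  define R where "R = (\<Prod>a\<in>{1..k} - {j}. 1 / (m a - lam (q a)))"
  have "Z_summand k lam m q = R / (m j - lam (q j))"
    unfolding Z_summand_def R_def by (subst prod.remove[OF _ j]) simp_all
  moreover have "Z_summand k lam (swap_coords m i j) q = R / (m i - lam (q j))"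
  proof -
    have "(\<Prod>a\<in>{1..k} - {j}. 1 / (swap_coords m i j a - lam (q a))) = R"
      unfolding R_def using i by (intro prod.cong) (auto simp: swap_coords_def)
    then show ?thesis
      unfolding Z_summand_def by (subst prod.remove[OF _ j]) (simp_all add: swap_coords_def)
  qed
  moreover have "m i - m j \<noteq> 0" "m i - lam (q j) \<noteq> 0" "m j - lam (q j) \<noteq> 0"
    using assms(3-5) by auto
  ultimately show ?thesis by (simp add: field_simps)
qed

lemma Z_partial_swap_coords_quotient:
  assumes "k \<le> l" and j: "j \<in> {1..k}" and i: "i \<notin> {1..k}"
    and "m i \<noteq> m j" and "\<forall>s\<in>{1..l}. m i \<noteq> lam s \<and> m j \<noteq> lam s"
  shows "(Z_partial l k lam m - Z_partial l k lam (swap_coords m i j)) / (m i - m j)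
       = (\<Sum>q | q permutes {1..l}. Z_summand k lam m q / (m i - lam (q j))) / fact (l - k)"
proof -
  let ?P = "{q. q permutes {1..l}}"
  have "(Z_partial l k lam m - Z_partial l k lam (swap_coords m i j)) / (m i - m j)
      = (\<Sum>q\<in>?P. (Z_summand k lam m q - Z_summand k lam (swap_coords m i j) q) / (m i - m j))
        / fact (l - k)"
    by (simp add: Z_partial_def sum_subtractf sum_divide_distrib diff_divide_distrib mult.commute)
  also have "\<dots> = (\<Sum>q\<in>?P. Z_summand k lam m q / (m i - lam (q j))) / fact (l - k)"
  proof (intro arg_cong[where f = "\<lambda>x. x / _"] sum.cong refl)
    fix q assume "q \<in> ?P"
    then have "q j \<in> {1..l}" using permutes_in_image[of q "{1..l}" j] j assms(1) by auto
    then show "(Z_summand k lam m q - Z_summand k lam (swap_coords m i j) q) / (m i - m j)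
        = Z_summand k lam m q / (m i - lam (q j))"
      using assms by (intro Z_summand_swap_coords_quotient) auto
  qed
  finally show ?thesis .
qed

section \<open>Coordinate derivatives of powers of \<open>\<Delta>\<close>\<close>

lemma Delta_fun_upd:
  assumes "i \<in> {1..n}"
  shows "Delta n l (m(i := t)) lam
       = (\<Prod>s\<in>{1..l}. t - lam s) * (\<Prod>a\<in>{1..n} - {i}. \<Prod>s\<in>{1..l}. m a - lam s)"
proof -
  have "Delta n l (m(i := t)) lam
      = (\<Prod>s\<in>{1..l}. t - lam s) * (\<Prod>a\<in>{1..n} - {i}. \<Prod>s\<in>{1..l}. (m(i := t)) a - lam s)"
    unfolding Delta_def using assms by (subst prod.remove[OF _ assms]) simp_all
  also have "(\<Prod>a\<in>{1..n} - {i}. \<Prod>s\<in>{1..l}. (m(i := t)) a - lam s)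
           = (\<Prod>a\<in>{1..n} - {i}. \<Prod>s\<in>{1..l}. m a - lam s)"
    by (intro prod.cong) auto
  finally show ?thesis .
qed

lemma swap_coords_transpose: "swap_coords m i j = m \<circ> Transposition.transpose i j"
  by (auto simp: swap_coords_def Transposition.transpose_def)

lemma Delta_swap_coords:
  assumes "i \<in> {1..n}" and "j \<in> {1..n}"
  shows "Delta n l (swap_coords m i j) lam = Delta n l m lam"
proof -
  have "Transposition.transpose i j permutes {1..n}"
    using assms by (rule permutes_swap_id)
  then show ?thesis
    unfolding Delta_def swap_coords_transpose
    using prod.permute[of _ "{1..n}" "\<lambda>a. \<Prod>s\<in>{1..l}. m a - lam s"] by (simp add: comp_def)
qed

lemma has_field_derivative_Delta_coordinate:
  assumes i: "i \<in> {1..n}" and "\<forall>s\<in>{1..l}. m i \<noteq> lam s"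
  shows "((\<lambda>t. Delta n l (m(i := t)) lam) has_field_derivative
           Delta n l m lam * (\<Sum>s\<in>{1..l}. 1 / (m i - lam s))) (at (m i))"
proof -
  define C where "C = (\<Prod>a\<in>{1..n} - {i}. \<Prod>s\<in>{1..l}. m a - lam s)"
  have "((\<lambda>t. \<Prod>s\<in>{1..l}. t - lam s) has_field_derivative
          (\<Prod>s\<in>{1..l}. m i - lam s) * (\<Sum>s\<in>{1..l}. 1 / (m i - lam s))) (at (m i))"
    using has_field_derivative_prod'[of "{1..l}" "\<lambda>s t. t - lam s" "m i" "\<lambda>_. 1"] assms(2)
    by (force intro!: derivative_eq_intros)
  then have "((\<lambda>t. (\<Prod>s\<in>{1..l}. t - lam s) * C) has_field_derivative
          (\<Prod>s\<in>{1..l}. m i - lam s) * (\<Sum>s\<in>{1..l}. 1 / (m i - lam s)) * C) (at (m i))"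
    by (rule DERIV_cmult_right)
  moreover have "(\<lambda>t. Delta n l (m(i := t)) lam) = (\<lambda>t. (\<Prod>s\<in>{1..l}. t - lam s) * C)"
    unfolding Delta_fun_upd[OF i] C_def ..
  moreover have "Delta n l m lam = (\<Prod>s\<in>{1..l}. m i - lam s) * C"
    using Delta_fun_upd[OF i, of l m "m i" lam] unfolding C_def fun_upd_triv .
  ultimately show ?thesis
    by (simp only: ac_simps)
qed

text \<open>Away from the branch cut \<open>\<real>\<^sub>\<le>\<^sub>0\<close> of \<open>powr\<close>, \<open>\<Delta>\<^sup>\<kappa>\<close> is holomorphic in each \<open>\<mu>\<^sub>i\<close>.\<close>

definition dunkl_domain :: "nat \<Rightarrow> nat \<Rightarrow> (nat \<Rightarrow> complex) \<Rightarrow> (nat \<Rightarrow> complex) set" where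
  "dunkl_domain n l lam =
     {m. (\<forall>i\<in>{1..n}. \<forall>j\<in>{1..n}. i \<noteq> j \<longrightarrow> m i \<noteq> m j)
       \<and> (\<forall>i\<in>{1..n}. \<forall>j\<in>{1..l}. m i \<noteq> lam j)
       \<and> Delta n l m lam \<notin> \<real>\<^sub>\<le>\<^sub>0}"

lemma swap_coords_in_dunkl_domain:
  assumes m: "m \<in> dunkl_domain n l lam" and ij: "i \<in> {1..n}" "j \<in> {1..n}"
  shows "swap_coords m i j \<in> dunkl_domain n l lam"
proof -
  let ?\<tau> = "Transposition.transpose i j"
  have dist: "\<forall>a\<in>{1..n}. \<forall>b\<in>{1..n}. a \<noteq> b \<longrightarrow> m a \<noteq> m b"
    and off: "\<forall>a\<in>{1..n}. \<forall>s\<in>{1..l}. m a \<noteq> lam s"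
    and branch: "Delta n l m lam \<notin> \<real>\<^sub>\<le>\<^sub>0"
    using m by (auto simp: dunkl_domain_def)
  have maps: "?\<tau> a \<in> {1..n}" if "a \<in> {1..n}" for a
    using ij that by (auto simp: Transposition.transpose_def)
  show ?thesis
    unfolding dunkl_domain_def mem_Collect_eq Delta_swap_coords[OF ij]
  proof (intro conjI ballI impI)
    fix a b assume "a \<in> {1..n}" "b \<in> {1..n}" "a \<noteq> b"
    then show "swap_coords m i j a \<noteq> swap_coords m i j b"
      using dist maps unfolding swap_coords_transpose comp_apply by (metis transpose_involutory)
  next
    fix a s assume "a \<in> {1..n}" "s \<in> {1..l}"
    then show "swap_coords m i j a \<noteq> lam s"
      using off maps unfolding swap_coords_transpose comp_apply by blast
  qed (rule branch)
qed

lemma eventually_fun_upd_in_dunkl_domain: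
  assumes m: "m \<in> dunkl_domain n l lam" and i: "i \<in> {1..n}"
  shows "\<forall>\<^sub>F t in nhds (m i). m(i := t) \<in> dunkl_domain n l lam"
proof -
  have dist: "\<forall>a\<in>{1..n}. \<forall>b\<in>{1..n}. a \<noteq> b \<longrightarrow> m a \<noteq> m b"
    and off: "\<forall>a\<in>{1..n}. \<forall>s\<in>{1..l}. m a \<noteq> lam s"
    and branch: "Delta n l m lam \<notin> \<real>\<^sub>\<le>\<^sub>0"
    using m by (auto simp: dunkl_domain_def)
  have "\<forall>\<^sub>F t in nhds (m i). \<forall>a\<in>{1..n} - {i}. t \<noteq> m a"
    using dist i by (intro eventually_ball_finite) (auto intro!: t1_space_nhds)
  moreover have "\<forall>\<^sub>F t in nhds (m i). \<forall>s\<in>{1..l}. t \<noteq> lam s"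
    using off i by (intro eventually_ball_finite) (auto intro!: t1_space_nhds)
  moreover have "\<forall>\<^sub>F t in nhds (m i). Delta n l (m(i := t)) lam \<notin> \<real>\<^sub>\<le>\<^sub>0"
  proof -
    have "\<forall>s\<in>{1..l}. m i \<noteq> lam s" using off i by blast
    then have "isCont (\<lambda>t. Delta n l (m(i := t)) lam) (m i)"
      by (rule DERIV_isCont[OF has_field_derivative_Delta_coordinate[of i n l m lam, OF i]])
    then have "\<forall>\<^sub>F t in at (m i). Delta n l (m(i := t)) lam \<in> - \<real>\<^sub>\<le>\<^sub>0"
      unfolding isCont_def
      by (rule topological_tendstoD) (use branch closed_nonpos_Reals_complex in auto)
    then show ?thesis using branch by (auto simp: eventually_nhds_conv_at)
  qed
  ultimately show ?thesis
  proof eventually_elim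
    case (elim t)
    have "(m(i := t)) a \<noteq> (m(i := t)) b" if "a \<in> {1..n}" "b \<in> {1..n}" "a \<noteq> b" for a b
      using that elim(1) dist by (cases "a = i"; cases "b = i") auto
    moreover have "(m(i := t)) a \<noteq> lam s" if "a \<in> {1..n}" "s \<in> {1..l}" for a s
      using that elim(2) off by (cases "a = i") auto
    ultimately show ?case
      using elim(3) by (simp add: dunkl_domain_def)
  qed
qed

lemma has_field_derivative_Delta_powr_coordinate:
  assumes m: "m \<in> dunkl_domain n l lam" and i: "i \<in> {1..n}"
  shows "((\<lambda>t. Delta n l (m(i := t)) lam powr kappa) has_field_derivative
           kappa * (\<Sum>s\<in>{1..l}. 1 / (m i - lam s)) * Delta n l m lam powr kappa) (at (m i))"
proof -
  let ?D = "Delta n l m lam" and ?A = "\<Sum>s\<in>{1..l}. 1 / (m i - lam s)"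
  have branch: "?D \<notin> \<real>\<^sub>\<le>\<^sub>0" and off: "\<forall>s\<in>{1..l}. m i \<noteq> lam s"
    using m i by (auto simp: dunkl_domain_def)
  have deriv: "((\<lambda>t. Delta n l (m(i := t)) lam powr kappa) has_field_derivative
          kappa * ?D powr (kappa - 1) * (?D * ?A)) (at (m i))"
    using has_field_derivative_powr[THEN DERIV_chain2,
            OF _ has_field_derivative_Delta_coordinate[of i n l m lam, OF i off]] branch
    by simp
  have powr_pred: "?D powr (kappa - 1) * ?D = ?D powr kappa"
    using powr_add[of ?D "kappa - 1" 1] by simp
  have eq: "kappa * ?D powr (kappa - 1) * (?D * ?A) = kappa * ?A * ?D powr kappa"
    by (simp only: ac_simps flip: powr_pred)
  from deriv show ?thesis unfolding eq .
qed

section \<open>Dunkl operators applied to powers of \<open>\<Delta>\<close>\<close>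

lemma deriv_fun_upd_Z_partial_Delta_powr:
  assumes "k < n" and m: "m \<in> dunkl_domain n l lam"
    and H: "\<forall>m\<in>dunkl_domain n l lam.
              H m = kappa ^ k * Z_partial l k lam m * Delta n l m lam powr kappa"
  shows "deriv (\<lambda>t. H (m(Suc k := t))) (m (Suc k))
       = kappa ^ Suc k * Z_partial l k lam m * (\<Sum>s\<in>{1..l}. 1 / (m (Suc k) - lam s))
         * Delta n l m lam powr kappa"
proof -
  have i: "Suc k \<in> {1..n}" using assms(1) by simp
  have "\<forall>\<^sub>F t in nhds (m (Suc k)).
          H (m(Suc k := t)) = kappa ^ k * Z_partial l k lam m * Delta n l (m(Suc k := t)) lam powr kappa"
    using eventually_fun_upd_in_dunkl_domain[OF m i]
  proof eventually_elim
    case (elim t)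
    have "Z_partial l k lam (m(Suc k := t)) = Z_partial l k lam m"
      by (rule Z_partial_cong) simp
    then show ?case using H elim by simp
  qed
  then have "deriv (\<lambda>t. H (m(Suc k := t))) (m (Suc k))
      = deriv (\<lambda>t. kappa ^ k * Z_partial l k lam m * Delta n l (m(Suc k := t)) lam powr kappa) (m (Suc k))"
    by (rule deriv_cong_ev) simp
  also have "\<dots> = kappa ^ k * Z_partial l k lam m
                  * (kappa * (\<Sum>s\<in>{1..l}. 1 / (m (Suc k) - lam s)) * Delta n l m lam powr kappa)"
    by (intro DERIV_imp_deriv DERIV_cmult has_field_derivative_Delta_powr_coordinate m i)
  finally show ?thesis by (simp only: power_Suc ac_simps)
qed

lemma dunkl_differences_Z_partial_Delta_powr:
  assumes "k < n" and "n \<le> l" and m: "m \<in> dunkl_domain n l lam"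
    and H: "\<forall>m\<in>dunkl_domain n l lam.
              H m = kappa ^ k * Z_partial l k lam m * Delta n l m lam powr kappa"
  shows "(\<Sum>j\<in>{1..n} - {Suc k}. (H m - H (swap_coords m (Suc k) j)) / (m (Suc k) - m j))
       = kappa ^ k * Delta n l m lam powr kappa
         * (\<Sum>j\<in>{1..k}. (\<Sum>q | q permutes {1..l}. Z_summand k lam m q / (m (Suc k) - lam (q j)))
              / fact (l - k))"
proof -
  let ?F = "Delta n l m lam powr kappa"
  define Q where "Q j = (Z_partial l k lam m - Z_partial l k lam (swap_coords m (Suc k) j))
                        / (m (Suc k) - m j)" for j
  have i: "Suc k \<in> {1..n}" using assms(1) by simp
  have dist: "\<forall>a\<in>{1..n}. \<forall>b\<in>{1..n}. a \<noteq> b \<longrightarrow> m a \<noteq> m b"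
    and off: "\<forall>a\<in>{1..n}. \<forall>s\<in>{1..l}. m a \<noteq> lam s"
    using m by (auto simp: dunkl_domain_def)
  have difference: "(H m - H (swap_coords m (Suc k) j)) / (m (Suc k) - m j) = kappa ^ k * ?F * Q j"
    if j: "j \<in> {1..n}" for j
  proof -
    have "H (swap_coords m (Suc k) j) = kappa ^ k * Z_partial l k lam (swap_coords m (Suc k) j) * ?F"
      using H swap_coords_in_dunkl_domain[OF m i j] Delta_swap_coords[OF i j] by simp
    then show ?thesis
      using H m unfolding Q_def by (simp add: right_diff_distrib left_diff_distrib ac_simps)
  qed
  have high: "Q j = 0" if "j \<in> {Suc (Suc k)..n}" for j
  proof -
    have "Z_partial l k lam (swap_coords m (Suc k) j) = Z_partial l k lam m"
      using that by (intro Z_partial_cong) (auto simp: swap_coords_def)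
    then show ?thesis by (simp add: Q_def)
  qed
  have low: "Q j = (\<Sum>q | q permutes {1..l}. Z_summand k lam m q / (m (Suc k) - lam (q j)))
                    / fact (l - k)" if j: "j \<in> {1..k}" for j
    unfolding Q_def using j assms(1,2) dist off i by (intro Z_partial_swap_coords_quotient) auto
  have "(\<Sum>j\<in>{1..n} - {Suc k}. (H m - H (swap_coords m (Suc k) j)) / (m (Suc k) - m j))
      = (\<Sum>j\<in>{1..n} - {Suc k}. kappa ^ k * ?F * Q j)"
    by (intro sum.cong refl difference) auto
  also have "\<dots> = kappa ^ k * ?F * (\<Sum>j\<in>{1..k} \<union> {Suc (Suc k)..n}. Q j)"
    unfolding sum_distrib_left[symmetric]
    using assms(1) by (intro arg_cong[where f = "\<lambda>A. _ * sum Q A"]) auto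
  also have "\<dots> = kappa ^ k * ?F * (\<Sum>j\<in>{1..k}. Q j)"
    by (subst sum.union_disjoint) (auto simp: high)
  finally show ?thesis
    by (simp add: low)
qed

lemma dunkl_Z_partial_Delta_powr:
  assumes "k < n" and "n \<le> l" and m: "m \<in> dunkl_domain n l lam"
    and H: "\<forall>m\<in>dunkl_domain n l lam.
              H m = kappa ^ k * Z_partial l k lam m * Delta n l m lam powr kappa"
  shows "dunkl n (- kappa) (Suc k) H m
       = kappa ^ Suc k * Z_partial l (Suc k) lam m * Delta n l m lam powr kappa"
proof -
  let ?A = "\<Sum>s\<in>{1..l}. 1 / (m (Suc k) - lam s)"
  let ?B = "\<Sum>j\<in>{1..k}. (\<Sum>q | q permutes {1..l}. Z_summand k lam m q / (m (Suc k) - lam (q j)))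
              / fact (l - k)"
  have "dunkl n (- kappa) (Suc k) H m
      = deriv (\<lambda>t. H (m(Suc k := t))) (m (Suc k))
        - kappa * (\<Sum>j\<in>{1..n} - {Suc k}. (H m - H (swap_coords m (Suc k) j)) / (m (Suc k) - m j))"
    by (simp add: dunkl_def)
  also have "\<dots> = kappa ^ Suc k * Z_partial l k lam m * ?A * Delta n l m lam powr kappa
                  - kappa * (kappa ^ k * Delta n l m lam powr kappa * ?B)"
    unfolding deriv_fun_upd_Z_partial_Delta_powr[OF assms(1) m H] dunkl_differences_Z_partial_Delta_powr[OF assms] ..
  also have "\<dots> = kappa ^ Suc k * (Z_partial l k lam m * ?A - ?B) * Delta n l m lam powr kappa"
    by (simp add: algebra_simps)
  also have "\<dots> = kappa ^ Suc k * Z_partial l (Suc k) lam m * Delta n l m lam powr kappa"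
    using assms(1,2) by (subst Z_partial_Suc) auto
  finally show ?thesis .
qed

lemma dunkl_seq_Delta_powr:
  assumes "k \<le> n" and "n \<le> l" and "m \<in> dunkl_domain n l lam"
  shows "dunkl_seq n (- kappa) k (\<lambda>m. Delta n l m lam powr kappa) m
       = kappa ^ k * Z_partial l k lam m * Delta n l m lam powr kappa"
  using assms(1,3)
proof (induction k arbitrary: m)
  case 0
  then show ?case by (simp add: Z_partial_0)
next
  case (Suc k)
  then have "\<forall>m\<in>dunkl_domain n l lam. dunkl_seq n (- kappa) k (\<lambda>m. Delta n l m lam powr kappa) m
      = kappa ^ k * Z_partial l k lam m * Delta n l m lam powr kappa"
    by simp
  then show ?case
    using dunkl_Z_partial_Delta_powr[OF _ assms(2) Suc.prems(2)] Suc.prems(1) by simp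
qed

section \<open>The coefficient \<open>Z\<^sub>1\<close>\<close>

lemma card_fibres_eq_1_iff_bij_betw:
  assumes "f ` A \<subseteq> B"
  shows "(\<forall>b\<in>B. card {a\<in>A. f a = b} = 1) \<longleftrightarrow> bij_betw f A B"
proof
  assume fibres: "\<forall>b\<in>B. card {a\<in>A. f a = b} = 1"
  have "inj_on f A"
  proof (rule inj_onI)
    fix x y assume "x \<in> A" "y \<in> A" "f x = f y"
    obtain z where z: "{a\<in>A. f a = f x} = {z}"
      using fibres assms \<open>x \<in> A\<close> card_1_singletonE by blast
    have "x \<in> {a\<in>A. f a = f x}" "y \<in> {a\<in>A. f a = f x}"
      using \<open>x \<in> A\<close> \<open>y \<in> A\<close> \<open>f x = f y\<close> by auto
    then show "x = y" unfolding z by simp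
  qed
  moreover have "B \<subseteq> f ` A"
  proof
    fix b assume "b \<in> B"
    then obtain z where "{a\<in>A. f a = b} = {z}"
      using fibres card_1_singletonE by blast
    then have "z \<in> A" "f z = b" by auto
    then show "b \<in> f ` A" by blast
  qed
  ultimately show "bij_betw f A B"
    using assms by (auto simp: bij_betw_def)
next
  assume "bij_betw f A B"
  then have inj: "inj_on f A" and onto: "f ` A = B" by (auto simp: bij_betw_def)
  show "\<forall>b\<in>B. card {a\<in>A. f a = b} = 1"
  proof
    fix b assume "b \<in> B"
    then obtain z where "z \<in> A" "f z = b" using onto by blast
    then have "{a\<in>A. f a = b} = {z}" using inj by (auto dest: inj_onD)
    then show "card {a\<in>A. f a = b} = 1" by simp
  qed
qed

lemma bij_betw_restrict_permutes:
  "bij_betw (\<lambda>p. restrict p A) {p. p permutes A} {f \<in> A \<rightarrow>\<^sub>E A. bij_betw f A A}"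
proof (rule bij_betw_byWitness[where f' = "\<lambda>f x. if x \<in> A then f x else x"])
  show "\<forall>p\<in>{p. p permutes A}. (\<lambda>x. if x \<in> A then restrict p A x else x) = p"
    by (auto simp: fun_eq_iff permutes_def)
  show "\<forall>f\<in>{f \<in> A \<rightarrow>\<^sub>E A. bij_betw f A A}. restrict (\<lambda>x. if x \<in> A then f x else x) A = f"
    by (auto simp: fun_eq_iff PiE_def extensional_def)
  show "(\<lambda>p. restrict p A) ` {p. p permutes A} \<subseteq> {f \<in> A \<rightarrow>\<^sub>E A. bij_betw f A A}"
  proof clarify
    fix p assume "p permutes A"
    then show "restrict p A \<in> A \<rightarrow>\<^sub>E A \<and> bij_betw (restrict p A) A A"
      using permutes_in_image permutes_imp_bij bij_betw_cong[of A p "restrict p A"] by fastforce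
  qed
  show "(\<lambda>f x. if x \<in> A then f x else x) ` {f \<in> A \<rightarrow>\<^sub>E A. bij_betw f A A} \<subseteq> {p. p permutes A}"
  proof clarify
    fix f assume "bij_betw f A A"
    then have "bij_betw (\<lambda>x. if x \<in> A then f x else x) A A"
      using bij_betw_cong[of A f "\<lambda>x. if x \<in> A then f x else x"] by simp
    then show "(\<lambda>x. if x \<in> A then f x else x) permutes A" by (rule bij_imp_permutes) simp
  qed
qed

lemma lin_prod_coeff_ones_permanent:
  "lin_prod_coeff l a (\<lambda>_. 1) = (\<Sum>q | q permutes {1..l}. \<Prod>i\<in>{1..l}. a (q i) i)"
proof -
  let ?A = "{1..l}"
  have "{f. f \<in> ?A \<rightarrow>\<^sub>E ?A \<and> (\<forall>k\<in>?A. card {j\<in>?A. f j = k} = 1)}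
      = {f \<in> ?A \<rightarrow>\<^sub>E ?A. bij_betw f ?A ?A}"
  proof (rule Collect_cong)
    fix f
    show "f \<in> ?A \<rightarrow>\<^sub>E ?A \<and> (\<forall>k\<in>?A. card {j\<in>?A. f j = k} = 1)
      \<longleftrightarrow> f \<in> ?A \<rightarrow>\<^sub>E ?A \<and> bij_betw f ?A ?A"
    proof (cases "f \<in> ?A \<rightarrow>\<^sub>E ?A")
      case True
      then have "f ` ?A \<subseteq> ?A" by (auto simp: PiE_iff)
      then show ?thesis using card_fibres_eq_1_iff_bij_betw[of f ?A ?A] True by blast
    qed simp
  qed
  then have "lin_prod_coeff l a (\<lambda>_. 1) = (\<Sum>f \<in> {f \<in> ?A \<rightarrow>\<^sub>E ?A. bij_betw f ?A ?A}. \<Prod>j\<in>?A. a j (f j))"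
    by (simp add: lin_prod_coeff_def)
  also have "\<dots> = (\<Sum>p | p permutes ?A. \<Prod>j\<in>?A. a j (restrict p ?A j))"
    by (rule sum.reindex_bij_betw[OF bij_betw_restrict_permutes, symmetric])
  also have "\<dots> = (\<Sum>p | p permutes ?A. \<Prod>j\<in>?A. a j (p j))"
    by (intro sum.cong prod.cong) auto
  also have "\<dots> = (\<Sum>q | q permutes ?A. \<Prod>j\<in>?A. a j (inv q j))"
    by (rule sum.reindex_bij_witness[where i = inv and j = inv])
       (auto simp: permutes_inv permutes_inv_inv)
  also have "\<dots> = (\<Sum>q | q permutes ?A. \<Prod>i\<in>?A. a (q i) i)"
  proof (intro sum.cong refl)
    fix q assume "q \<in> {q. q permutes ?A}"
    then have q: "q permutes ?A" by simp
    then show "(\<Prod>j\<in>?A. a j (inv q j)) = (\<Prod>i\<in>?A. a (q i) i)"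
      using prod.permute[OF q, of "\<lambda>j. a j (inv q j)"] by (simp add: permutes_inverses(2))
  qed
  finally show ?thesis .
qed

lemma Z1_eq_Z_partial:
  assumes "N - 1 \<le> l"
  shows "Z1 N l mu lam = Z_partial l (N - 1) lam mu"
proof -
  have summand: "(\<Prod>i\<in>{1..l}. Z1_factor_coeff N mu lam (q i) i) = Z_summand (N - 1) lam mu q" for q
  proof -
    have "(\<Prod>i\<in>{1..l}. Z1_factor_coeff N mu lam (q i) i)
        = (\<Prod>i\<in>{i\<in>{1..l}. i \<le> N - 1}. 1 / (mu i - lam (q i)))"
      unfolding Z1_factor_coeff_def by (rule prod.inter_filter[symmetric]) simp
    also have "{i\<in>{1..l}. i \<le> N - 1} = {1..N - 1}" using assms by auto
    finally show ?thesis unfolding Z_summand_def .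
  qed
  have "lin_prod_coeff l (Z1_factor_coeff N mu lam) (\<lambda>_. 1)
      = (\<Sum>q | q permutes {1..l}. Z_summand (N - 1) lam mu q)"
    unfolding lin_prod_coeff_ones_permanent summand ..
  then show ?thesis
    unfolding Z1_def Z_partial_def by simp
qed

theorem lemma6p2:
  fixes N l :: nat and kappa :: complex and mu lam :: "nat \<Rightarrow> complex"
  assumes "N \<ge> 1" and "l \<ge> N - 1"
    and "\<forall>i\<in>{1..N-1}. \<forall>j\<in>{1..N-1}. i \<noteq> j \<longrightarrow> mu i \<noteq> mu j"
    and "\<forall>i\<in>{1..N-1}. \<forall>j\<in>{1..l}. mu i \<noteq> lam j"
    and "Delta (N - 1) l mu lam \<notin> complex_of_real ` {..0}"
  shows "Delta (N - 1) l mu lam powr (- kappa)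
           * dunkl_seq (N - 1) (- kappa) (N - 1)
               (\<lambda>m. Delta (N - 1) l m lam powr kappa) mu
         = kappa ^ (N - 1) * Z1 N l mu lam"
proof -
  let ?D = "Delta (N - 1) l mu lam"
  have "mu \<in> dunkl_domain (N - 1) l lam"
    using assms(3-5) by (auto simp: dunkl_domain_def nonpos_Reals_def)
  then have "dunkl_seq (N - 1) (- kappa) (N - 1) (\<lambda>m. Delta (N - 1) l m lam powr kappa) mu
      = kappa ^ (N - 1) * Z_partial l (N - 1) lam mu * ?D powr kappa"
    using assms(2) by (intro dunkl_seq_Delta_powr) auto
  moreover have "?D \<noteq> 0"
    using assms(5) by force
  then have "?D powr (- kappa) * ?D powr kappa = 1"
    by (simp add: powr_minus)
  ultimately show ?thesis
    using Z1_eq_Z_partial[OF assms(2)] by (simp add: ac_simps)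
qed

end
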